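(* Let $\boldsymbol\zeta=(\mathbf z^{(\mathsf e,j)})_{(\mathsf e,j)\in\mathcal E\times[K]}$ be a restriction sequence for $\mathsf{DIHP}(G,n,\alpha,K)$ that is not cyclic, and let $V_1,\dots,V_t\subseteq\mathcal V\times[n]$ be the connected components of $H_{\boldsymbol\zeta}$ with at least two vertices. Then (1) $\mathbb E_x[g_{\boldsymbol\zeta}(x)]=1$ for $x$ uniform in $\mathbb Z_N^{\mathcal V\times[n]}$; and (2) for any $b\in\mathbb Z_N^{\mathcal V\times[n]}$, $\widehat{g_{\boldsymbol\zeta}}(b)\ne0$ only if $\mathrm{supp}(b)\subseteq\bigcup_{i\in[t]}V_i$ and $|\mathrm{supp}(b)\cap V_i|\ne1$ for every $i\in[t]$.
   Context: $N\ge2$, $\mathbb Z_N=\mathbb Z/N\mathbb Z$. $G=(\mathcal V,\mathcal E,N,(\mu_{\mathsf e}))$ is a distribution-labeled $k$-graph: finite set $\mathcal V$, finite multiset $\mathcal E$ of ordered $k$-tuples of distinct vertices, and one-wise independent distributions $\mu_{\mathsf e}$ on $\mathbb Z_N^k$ (each coordinate marginal uniform), with pmf $\mu_{\mathsf e}(\cdot)$. For $\mathsf e=(\mathsf v_1,\dots,\mathsf v_k)$, $\mathcal U_{\mathsf e}=(\{\mathsf v_1\}\times[n],\dots,\{\mathsf v_k\}\times[n])$ and $\prod\mathcal U_{\mathsf e}$ is the product of these sets. A restriction sequence is $\boldsymbol\zeta=(\mathbf z^{(\mathsf e,j)})_{(\mathsf e,j)\in\mathcal E\times[K]}$ where each $\mathbf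 z^{(\mathsf e,j)}$ is a map $\prod\mathcal U_{\mathsf e}\to\mathbb Z_N^k\cup\{\mathtt{nil}\}$ whose support $\{e:\mathbf z(e)\ne\mathtt{nil}\}$ is a matching (pairwise vertex-disjoint tuples) of size at most $\alpha n$. $H_{\boldsymbol\zeta}$ is the $k$-uniform hypergraph on $\mathcal V\times[n]$ with edge set $\bigcup\mathrm{supp}\mathbf z^{(\mathsf e,j)}$. $\boldsymbol\zeta$ is cyclic if the supports are not pairwise disjoint or some $\ell\ge1$ edges of $H_{\boldsymbol\zeta}$ together cover at most $\ell(k-1)$ vertices. For $e=(v_1,\dots,v_k)$, $x_{|e}=(x_{v_1},\dots,x_{v_k})$. $g_{\boldsymbol\zeta}(x)=\prod_{(\mathsf e,j)}\prod_{e\in\mathrm{supp}\mathbf z^{(\mathsf e,j)}}N^k\mu_{\mathsf e}(x_{|e}-\mathbf z^{(\mathsf e,j)}(e))$. Fourier: $\chi_b(x)=\exp(\frac{2\pi\mathrm i}N\sum_vb_vx_v)$, $\widehat g(b)=\mathbb E_x[g(x)\overline{\chi_b(x)}]$. *)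

theory Defs
  imports "HOL-Probability.Probability"
begin

text \<open>
Conventions.
 \<^item> Vertex set of G: a finite set V :: 'v set.
 \<^item> The multiset of edges of G is modelled by a finite index set E :: 'i set together with
   tup :: 'i => 'v list (the k-tuple of edge i); repeated tuples = multiplicities.
 \<^item> Z_N is modelled by {0..<N} :: nat set, with subtraction modulo N.
 \<^item> Z_N^k is modelled by lists of length k with entries < N; mu i is a pmf on such lists.
 \<^item> [n] = {1..n}, [K] = {1..K}. Vertices of the blown-up graph are pairs (v,a) in V x [n].
 \<^item> A restriction z i j maps a tuple t in prod U_(tup i) to Some value in Z_N^k or None (nil).
\<close>

definition ZN_vecs :: "nat \<Rightarrow> nat \<Rightarrow> nat list set" where
  "ZN_vecs N k = {xs. length xs = k \<and> (\<forall>a\<in>set xs. a < N)}"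

definition dlgraph :: "'v set \<Rightarrow> 'i set \<Rightarrow> ('i \<Rightarrow> 'v list) \<Rightarrow> nat \<Rightarrow> nat
    \<Rightarrow> ('i \<Rightarrow> nat list pmf) \<Rightarrow> bool" where
  "dlgraph V E tup k N mu \<longleftrightarrow> finite V \<and> finite E \<and> N \<ge> 2 \<and>
     (\<forall>i\<in>E. length (tup i) = k \<and> distinct (tup i) \<and> set (tup i) \<subseteq> V \<and>
        set_pmf (mu i) \<subseteq> ZN_vecs N k \<and>
        (\<forall>m<k. \<forall>a<N. measure_pmf.prob (mu i) {xs. xs ! m = a} = 1 / real N))"

definition prodU :: "'v list \<Rightarrow> nat \<Rightarrow> ('v \<times> nat) list set" where
  "prodU e n = {t. length t = length e \<and>
      (\<forall>m<length t. fst (t ! m) = e ! m \<and> snd (t ! m) \<in> {1..n})}"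

definition rsupp :: "'v list \<Rightarrow> nat \<Rightarrow> (('v \<times> nat) list \<Rightarrow> nat list option)
    \<Rightarrow> ('v \<times> nat) list set" where
  "rsupp e n z = {t \<in> prodU e n. z t \<noteq> None}"

definition restriction_seq ::
  "'i set \<Rightarrow> ('i \<Rightarrow> 'v list) \<Rightarrow> nat \<Rightarrow> nat \<Rightarrow> nat \<Rightarrow> real \<Rightarrow> nat
     \<Rightarrow> ('i \<Rightarrow> nat \<Rightarrow> ('v \<times> nat) list \<Rightarrow> nat list option) \<Rightarrow> bool" where
  "restriction_seq E tup k N n \<alpha> K z \<longleftrightarrow>
     (\<forall>i\<in>E. \<forall>j\<in>{1..K}.
        (\<forall>t\<in>rsupp (tup i) n (z i j). the (z i j t) \<in> ZN_vecs N k) \<and>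
        (\<forall>t\<in>rsupp (tup i) n (z i j). \<forall>t'\<in>rsupp (tup i) n (z i j).
            t \<noteq> t' \<longrightarrow> set t \<inter> set t' = {}) \<and>
        real (card (rsupp (tup i) n (z i j))) \<le> \<alpha> * real n)"

definition Hedges :: "'i set \<Rightarrow> ('i \<Rightarrow> 'v list) \<Rightarrow> nat \<Rightarrow> nat
    \<Rightarrow> ('i \<Rightarrow> nat \<Rightarrow> ('v \<times> nat) list \<Rightarrow> nat list option) \<Rightarrow> ('v \<times> nat) list set" where
  "Hedges E tup n K z = (\<Union>i\<in>E. \<Union>j\<in>{1..K}. rsupp (tup i) n (z i j))"

definition cyclic :: "'i set \<Rightarrow> ('i \<Rightarrow> 'v list) \<Rightarrow> nat \<Rightarrow> nat \<Rightarrow> nat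
    \<Rightarrow> ('i \<Rightarrow> nat \<Rightarrow> ('v \<times> nat) list \<Rightarrow> nat list option) \<Rightarrow> bool" where
  "cyclic E tup k n K z \<longleftrightarrow>
     (\<exists>i\<in>E. \<exists>j\<in>{1..K}. \<exists>i'\<in>E. \<exists>j'\<in>{1..K}. (i, j) \<noteq> (i', j') \<and>
         rsupp (tup i) n (z i j) \<inter> rsupp (tup i') n (z i' j') \<noteq> {}) \<or>
     (\<exists>F \<subseteq> Hedges E tup n K z. F \<noteq> {} \<and> finite F \<and>
         card (\<Union>t\<in>F. set t) \<le> card F * (k - 1))"

definition Hadj :: "'i set \<Rightarrow> ('i \<Rightarrow> 'v list) \<Rightarrow> nat \<Rightarrow> nat
    \<Rightarrow> ('i \<Rightarrow> nat \<Rightarrow> ('v \<times> nat) list \<Rightarrow> nat list option) \<Rightarrow> (('v \<times> nat) \<times> ('v \<times> nat)) set" where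
  "Hadj E tup n K z = {(u, w). \<exists>t\<in>Hedges E tup n K z. u \<in> set t \<and> w \<in> set t}"

definition Hcomponents :: "'v set \<Rightarrow> 'i set \<Rightarrow> ('i \<Rightarrow> 'v list) \<Rightarrow> nat \<Rightarrow> nat
    \<Rightarrow> ('i \<Rightarrow> nat \<Rightarrow> ('v \<times> nat) list \<Rightarrow> nat list option) \<Rightarrow> ('v \<times> nat) set set" where
  "Hcomponents V E tup n K z =
     {{w \<in> V \<times> {1..n}. (u, w) \<in> (Hadj E tup n K z)\<^sup>*} | u. u \<in> V \<times> {1..n}}"

definition vsub :: "nat \<Rightarrow> nat list \<Rightarrow> nat list \<Rightarrow> nat list" where
  "vsub N xs zs = map2 (\<lambda>a c. (a + N - c mod N) mod N) xs zs"

definition gzeta :: "'i set \<Rightarrow> ('i \<Rightarrow> 'v list) \<Rightarrow> nat \<Rightarrow> nat \<Rightarrow> ('i \<Rightarrow> nat list pmf)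
    \<Rightarrow> nat \<Rightarrow> nat \<Rightarrow> ('i \<Rightarrow> nat \<Rightarrow> ('v \<times> nat) list \<Rightarrow> nat list option)
    \<Rightarrow> ('v \<times> nat \<Rightarrow> nat) \<Rightarrow> real" where
  "gzeta E tup k N mu n K z x =
     (\<Prod>i\<in>E. \<Prod>j\<in>{1..K}. \<Prod>t\<in>rsupp (tup i) n (z i j).
        real N ^ k * pmf (mu i) (vsub N (map x t) (the (z i j t))))"

definition assignments :: "'v set \<Rightarrow> nat \<Rightarrow> nat \<Rightarrow> ('v \<times> nat \<Rightarrow> nat) set" where
  "assignments V n N = PiE (V \<times> {1..n}) (\<lambda>_. {0..<N})"

definition unif_expect :: "'v set \<Rightarrow> nat \<Rightarrow> nat \<Rightarrow> (('v \<times> nat \<Rightarrow> nat) \<Rightarrow> 'a::real_field) \<Rightarrow> 'a" where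
  "unif_expect V n N f = (\<Sum>x\<in>assignments V n N. f x) / of_nat (card (assignments V n N))"

definition character :: "'v set \<Rightarrow> nat \<Rightarrow> nat \<Rightarrow> ('v \<times> nat \<Rightarrow> nat) \<Rightarrow> ('v \<times> nat \<Rightarrow> nat) \<Rightarrow> complex" where
  "character V n N b x =
     exp (2 * of_real pi * \<i> / of_nat N * of_nat (\<Sum>v\<in>V \<times> {1..n}. b v * x v))"

definition fourier :: "'v set \<Rightarrow> nat \<Rightarrow> nat \<Rightarrow> (('v \<times> nat \<Rightarrow> nat) \<Rightarrow> real)
    \<Rightarrow> ('v \<times> nat \<Rightarrow> nat) \<Rightarrow> complex" where
  "fourier V n N g b = unif_expect V n N (\<lambda>x. complex_of_real (g x) * cnj (character V n N b x))"

definition fsupp :: "'v set \<Rightarrow> nat \<Rightarrow> ('v \<times> nat \<Rightarrow> nat) \<Rightarrow> ('v \<times> nat) set" where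
  "fsupp V n b = {u \<in> V \<times> {1..n}. b u \<noteq> 0}"

end

theory Submission
  imports Defs
begin

text \<open>
  Since \<open>\<zeta>\<close> is not cyclic, the factors of \<open>g\<^sub>\<zeta>\<close> sit on the edges of a \<open>k\<close>-uniform
  hyperforest, and every nonempty hyperforest has a leaf edge, meeting the other edges in at
  most one vertex. Summing out the private coordinates of a leaf edge only uses that its
  distribution is one-wise independent, so by induction on the number of edges the weight
  \<open>g\<^sub>\<zeta>\<close> has uniform one-dimensional marginals; in particular \<open>E g\<^sub>\<zeta> = 1\<close>.
  If \<open>b\<close> meets a component \<open>C\<close> of \<open>H\<^sub>\<zeta>\<close> in a single vertex \<open>u\<close>, the factors inside and
  outside \<open>C\<close> involve disjoint coordinates, and the uniform marginal at \<open>u\<close> of the forest on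
  \<open>C\<close> turns the sum over the coordinates of \<open>C\<close> into a full sum of \<open>N\<close>-th roots of unity,
  which vanishes. Isolated vertices are components of size one.
\<close>

lemma sum_PiE_override_on:
  fixes F :: "('d \<Rightarrow> 'b) \<Rightarrow> 'a::comm_monoid_add"
  assumes "P \<subseteq> D"
  shows "(\<Sum>x\<in>PiE D B. F x) = (\<Sum>x\<in>PiE (D - P) B. \<Sum>y\<in>PiE P B. F (override_on x y P))"
proof -
  have "(\<Sum>x\<in>PiE (D - P) B. \<Sum>y\<in>PiE P B. F (override_on x y P))
      = (\<Sum>(x, y)\<in>PiE (D - P) B \<times> PiE P B. F (override_on x y P))"
    by (simp add: sum.cartesian_product)
  also have "\<dots> = (\<Sum>x\<in>PiE D B. F x)"
    by (rule sum.reindex_bij_witness[where i = "\<lambda>x. (restrict x (D - P), restrict x P)"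
          and j = "\<lambda>(x, y). override_on x y P"])
       (use assms in \<open>auto simp: override_on_def PiE_iff extensional_def fun_eq_iff\<close>)
  finally show ?thesis ..
qed

lemma sum_PiE_apply:
  fixes h :: "'b \<Rightarrow> 'a::comm_semiring_1"
  assumes "finite D" "u \<in> D"
  shows "(\<Sum>x\<in>PiE D (\<lambda>_. A). h (x u)) = of_nat (card A) ^ (card D - 1) * sum h A"
proof -
  have "D - (D - {u}) = {u}" using assms(2) by auto
  then have "(\<Sum>x\<in>PiE D (\<lambda>_. A). h (x u))
      = (\<Sum>x\<in>PiE {u} (\<lambda>_. A). of_nat (card (PiE (D - {u}) (\<lambda>_. A))) * h (x u))"
    by (subst sum_PiE_override_on[of "D - {u}"]) auto
  also have "\<dots> = (\<Sum>a\<in>A. of_nat (card A) ^ (card D - 1) * h a)"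
    using assms by (intro sum.reindex_bij_witness[where i = "\<lambda>a. (\<lambda>_. undefined)(u := a)"
          and j = "\<lambda>x. x u"]) (auto simp: card_PiE PiE_iff extensional_def fun_eq_iff)
  finally show ?thesis by (simp add: sum_distrib_left)
qed

definition ZN_fibre :: "nat \<Rightarrow> nat \<Rightarrow> nat \<Rightarrow> nat \<Rightarrow> nat list set" where
  "ZN_fibre N k m a = {v \<in> ZN_vecs N k. v ! m = a}"

lemma finite_ZN_vecs: "finite (ZN_vecs N k)"
proof (rule finite_subset)
  show "ZN_vecs N k \<subseteq> {xs. set xs \<subseteq> {..<N} \<and> length xs = k}" by (auto simp: ZN_vecs_def)
qed (simp add: finite_lists_length_eq)

lemma sum_PiE_map_tuple:
  fixes F :: "nat list \<Rightarrow> 'a::comm_monoid_add"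
  assumes T: "distinct T" "m < length T" and x: "x (T ! m) < N"
  defines "P \<equiv> set T - {T ! m}"
  shows "(\<Sum>y\<in>PiE P (\<lambda>_. {0..<N}). F (map (override_on x y P) T))
       = sum F (ZN_fibre N (length T) m (x (T ! m)))"
proof -
  have nth_in_P: "T ! i \<in> P \<longleftrightarrow> i \<noteq> m" if "i < length T" for i
    using T that by (auto simp: P_def nth_eq_iff_index_eq)
  have P_nth: "\<exists>i<length T. i \<noteq> m \<and> s = T ! i" if "s \<in> P" for s
    using that by (auto simp: P_def in_set_conv_nth)
  have map_of: "the (map_of (zip T v) (T ! i)) = v ! i"
    if "length v = length T" "i < length T" for v :: "nat list" and i
    using T that by (simp add: map_of_zip_nth)
  show ?thesis
  proof (rule sum.reindex_bij_witness[where j = "\<lambda>y. map (override_on x y P) T"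
        and i = "\<lambda>v. restrict (\<lambda>s. the (map_of (zip T v) s)) P"])
    fix y assume y: "y \<in> PiE P (\<lambda>_. {0..<N})"
    have "override_on x y P (T ! i) < N" if "i < length T" for i
      using y x nth_in_P[OF that] by (cases "i = m") (auto simp: PiE_iff)
    then show "map (override_on x y P) T \<in> ZN_fibre N (length T) m (x (T ! m))"
      using T nth_in_P by (auto simp: ZN_fibre_def ZN_vecs_def set_conv_nth)
    show "restrict (\<lambda>s. the (map_of (zip T (map (override_on x y P) T)) s)) P = y"
    proof
      fix s show "restrict (\<lambda>s. the (map_of (zip T (map (override_on x y P) T)) s)) P s = y s"
        using y P_nth[of s] map_of[of "map (override_on x y P) T"] by (auto simp: PiE_iff extensional_def)
    qed
  next
    fix v assume "v \<in> ZN_fibre N (length T) m (x (T ! m))"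
    then have v_len: "length v = length T" and v_N: "\<forall>i<length T. v ! i < N" and v_m: "v ! m = x (T ! m)"
      by (auto simp: ZN_fibre_def ZN_vecs_def)
    show "restrict (\<lambda>s. the (map_of (zip T v) s)) P \<in> PiE P (\<lambda>_. {0..<N})"
      using P_nth map_of[OF v_len] v_N by fastforce
    show "map (override_on x (restrict (\<lambda>s. the (map_of (zip T v) s)) P) P) T = v"
      using v_len v_N v_m nth_in_P map_of[OF v_len] by (intro nth_equalityI) (auto simp: override_on_def)
  qed simp
qed

(* \<open>f\<close> is \<open>N ^ k\<close> times a pmf on \<open>Z_N ^ k\<close> with uniform one-dimensional marginals,
   like the factors \<open>N ^ k \<mu>\<^sub>e (x - z)\<close> of \<open>g\<^sub>\<zeta>\<close>. *)
definition one_wise :: "(nat list \<Rightarrow> 'a::comm_semiring_1) \<Rightarrow> nat \<Rightarrow> nat \<Rightarrow> bool" where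
  "one_wise f N k \<longleftrightarrow> (\<forall>m<k. \<forall>a<N. sum f (ZN_fibre N k m a) = of_nat N ^ (k - 1))"

lemma sum_one_wise_fibres:
  fixes h :: "nat \<Rightarrow> 'a::comm_semiring_1"
  assumes f: "one_wise f N k" and "m < k" "\<mu> < k"
  shows "(\<Sum>c<N. \<Sum>v\<in>ZN_fibre N k m c. h (v ! \<mu>) * f v) = of_nat N ^ (k - 1) * (\<Sum>a<N. h a)"
proof -
  have coord: "(\<lambda>v. v ! i) ` ZN_vecs N k \<subseteq> {..<N}" if "i < k" for i
    using that by (auto simp: ZN_vecs_def)
  have "(\<Sum>c<N. \<Sum>v\<in>ZN_fibre N k m c. h (v ! \<mu>) * f v) = (\<Sum>v\<in>ZN_vecs N k. h (v ! \<mu>) * f v)"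
    unfolding ZN_fibre_def using coord assms(2) by (intro sum.group finite_ZN_vecs) auto
  also have "\<dots> = (\<Sum>a<N. \<Sum>v\<in>ZN_fibre N k \<mu> a. h (v ! \<mu>) * f v)"
    unfolding ZN_fibre_def using coord assms(3) by (intro sum.group[symmetric] finite_ZN_vecs) auto
  also have "\<dots> = (\<Sum>a<N. \<Sum>v\<in>ZN_fibre N k \<mu> a. h a * f v)"
    by (auto simp: ZN_fibre_def intro!: sum.cong)
  also have "\<dots> = (\<Sum>a<N. h a * of_nat N ^ (k - 1))"
    using f assms(3) by (simp add: one_wise_def flip: sum_distrib_left)
  also have "\<dots> = of_nat N ^ (k - 1) * (\<Sum>a<N. h a)"
    by (subst mult.commute) (simp add: sum_distrib_right)
  finally show ?thesis .
qed

lemma sum_PiE_collapse_tuple: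
  fixes H :: "('d \<Rightarrow> nat) \<Rightarrow> 'a::comm_semiring_1" and g :: "nat list \<Rightarrow> 'a"
  assumes "set T \<subseteq> D" "distinct T" "m < length T"
    and H: "\<And>x y. H (override_on x y (set T - {T ! m})) = H x"
  shows "of_nat N ^ (length T - 1) * (\<Sum>x\<in>PiE D (\<lambda>_. {0..<N}). H x * g (map x T))
       = (\<Sum>x\<in>PiE D (\<lambda>_. {0..<N}). H x * sum g (ZN_fibre N (length T) m (x (T ! m))))"
proof -
  define P where "P = set T - {T ! m}"
  define \<psi> where "\<psi> x = sum g (ZN_fibre N (length T) m (x (T ! m)))" for x :: "'d \<Rightarrow> nat"
  have P: "P \<subseteq> D" "T ! m \<notin> P" "card P = length T - 1"
    using assms by (auto simp: P_def distinct_card)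
  have "T ! m \<in> D - P"
    using assms(1,3) P(2) nth_mem[OF assms(3)] by blast
  then have vertex: "x (T ! m) < N" if "x \<in> PiE (D - P) (\<lambda>_. {0..<N})" for x
    using that by (auto simp: PiE_iff)
  have fibre: "(\<Sum>y\<in>PiE P (\<lambda>_. {0..<N}). g (map (override_on x y P) T)) = \<psi> x"
    if "x \<in> PiE (D - P) (\<lambda>_. {0..<N})" for x
    unfolding P_def \<psi>_def by (rule sum_PiE_map_tuple[where x = x, OF assms(2,3) vertex[OF that]])
  have "(\<Sum>x\<in>PiE D (\<lambda>_. {0..<N}). H x * g (map x T))
      = (\<Sum>x\<in>PiE (D - P) (\<lambda>_. {0..<N}). H x * \<psi> x)"
    using fibre by (subst sum_PiE_override_on[OF P(1)]) (simp add: H P_def \<psi>_def flip: sum_distrib_left)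
  moreover have "(\<Sum>x\<in>PiE D (\<lambda>_. {0..<N}). H x * \<psi> x)
      = of_nat N ^ (length T - 1) * (\<Sum>x\<in>PiE (D - P) (\<lambda>_. {0..<N}). H x * \<psi> x)"
    using P by (subst sum_PiE_override_on[OF P(1)])
      (simp add: H P_def \<psi>_def card_PiE sum_distrib_left mult.commute)
  ultimately show ?thesis by (simp add: \<psi>_def)
qed

(* Double counting: a vertex of degree \<open>d\<close> contributes \<open>2\<close> to the left, plus \<open>d\<close> if \<open>d \<ge> 2\<close>,
   and \<open>2 d\<close> to the right. *)
lemma card_Union_le_by_overlaps:
  fixes A :: "'j \<Rightarrow> 'd set"
  assumes I: "finite I" and A: "\<forall>\<iota>\<in>I. finite (A \<iota>)"
  shows "2 * card (\<Union>\<iota>\<in>I. A \<iota>) + (\<Sum>\<iota>\<in>I. card (A \<iota> \<inter> (\<Union>\<iota>'\<in>I - {\<iota>}. A \<iota>')))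
       \<le> 2 * (\<Sum>\<iota>\<in>I. card (A \<iota>))"
proof -
  define W where "W = (\<Union>\<iota>\<in>I. A \<iota>)"
  define deg where "deg v = card {\<iota>\<in>I. v \<in> A \<iota>}" for v
  have W: "finite W" using I A by (simp add: W_def)
  have double_count: "(\<Sum>\<iota>\<in>I. card (A \<iota> \<inter> S)) = (\<Sum>v\<in>W \<inter> S. deg v)" for S
  proof -
    have "card (A \<iota> \<inter> S) = (\<Sum>v\<in>W \<inter> S. of_bool (v \<in> A \<iota>))" if "\<iota> \<in> I" for \<iota>
    proof -
      have "W \<inter> S \<inter> {v. v \<in> A \<iota>} = A \<iota> \<inter> S" using that by (auto simp: W_def)
      then show ?thesis using W by simp
    qed
    then have "(\<Sum>\<iota>\<in>I. card (A \<iota> \<inter> S)) = (\<Sum>v\<in>W \<inter> S. \<Sum>\<iota>\<in>I. of_bool (v \<in> A \<iota>))"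
      by (simp add: sum.swap[of _ I])
    also have "\<dots> = (\<Sum>v\<in>W \<inter> S. deg v)"
      using I by (simp add: deg_def Int_def conj_commute)
    finally show ?thesis .
  qed
  have overlap: "A \<iota> \<inter> (\<Union>\<iota>'\<in>I - {\<iota>}. A \<iota>') = A \<iota> \<inter> {v. 2 \<le> deg v}" if "\<iota> \<in> I" for \<iota>
  proof -
    have "deg v = Suc (card {\<iota>'\<in>I - {\<iota>}. v \<in> A \<iota>'})" if "v \<in> A \<iota>" for v
    proof -
      have "{\<iota>'\<in>I. v \<in> A \<iota>'} = insert \<iota> {\<iota>'\<in>I - {\<iota>}. v \<in> A \<iota>'}" using \<open>\<iota> \<in> I\<close> that by auto
      then show ?thesis using I by (simp add: deg_def)
    qed
    then show ?thesis using I by (auto simp: card_gt_0_iff Suc_le_eq)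
  qed
  have deg_pos: "1 \<le> deg v" if "v \<in> W" for v
    using that I by (auto simp: W_def deg_def Suc_le_eq card_gt_0_iff)
  have "(\<Sum>v\<in>W. 2 + (if 2 \<le> deg v then deg v else 0)) \<le> (\<Sum>v\<in>W. 2 * deg v)"
    using deg_pos by (intro sum_mono) fastforce
  moreover have "(\<Sum>v\<in>W. 2 + (if 2 \<le> deg v then deg v else 0))
      = 2 * card W + (\<Sum>v\<in>W. if 2 \<le> deg v then deg v else 0)"
    by (simp only: sum.distrib sum_constant) simp
  moreover have "(\<Sum>v\<in>W. if 2 \<le> deg v then deg v else 0) = (\<Sum>v\<in>W \<inter> {v. 2 \<le> deg v}. deg v)"
    using W by (simp add: sum.inter_filter[symmetric] Int_def)
  ultimately show ?thesis
    using double_count[of UNIV] double_count[of "{v. 2 \<le> deg v}"] overlap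
    by (simp add: W_def sum_distrib_left)
qed

lemma hyperforest_has_leaf:
  fixes A :: "'j \<Rightarrow> 'd set"
  assumes I: "finite I" "I \<noteq> {}" and A: "\<forall>\<iota>\<in>I. finite (A \<iota>) \<and> card (A \<iota>) = k"
    and forest: "card I * (k - 1) < card (\<Union>\<iota>\<in>I. A \<iota>)"
  shows "\<exists>t\<in>I. \<exists>r\<in>A t. \<forall>\<iota>\<in>I - {t}. A \<iota> \<inter> (A t - {r}) = {}"
proof -
  have "\<exists>t\<in>I. card (A t \<inter> (\<Union>\<iota>\<in>I - {t}. A \<iota>)) \<le> 1"
  proof (rule ccontr)
    assume "\<not> ?thesis"
    then have "(\<Sum>\<iota>\<in>I. 2) \<le> (\<Sum>\<iota>\<in>I. card (A \<iota> \<inter> (\<Union>\<iota>'\<in>I - {\<iota>}. A \<iota>')))"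
      by (intro sum_mono) auto
    moreover have "(\<Sum>\<iota>\<in>I. card (A \<iota>)) = card I * k"
      using A by simp
    ultimately have "card (\<Union>\<iota>\<in>I. A \<iota>) + card I \<le> card I * k"
      using card_Union_le_by_overlaps[OF I(1), of A] A by simp
    with forest show False by (simp add: diff_mult_distrib2)
  qed
  then obtain t where t: "t \<in> I" and overlap: "card (A t \<inter> (\<Union>\<iota>\<in>I - {t}. A \<iota>)) \<le> 1"
    by blast
  have "A t \<noteq> {}"
  proof
    assume "A t = {}"
    then have "\<forall>\<iota>\<in>I. A \<iota> = {}" using A t by (metis card_0_eq card.empty)
    with forest show False by simp
  qed
  moreover have "\<forall>r\<in>A t \<inter> (\<Union>\<iota>\<in>I - {t}. A \<iota>). \<forall>r'\<in>A t \<inter> (\<Union>\<iota>\<in>I - {t}. A \<iota>). r = r'"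
    using overlap A t by (subst card_le_Suc0_iff_eq[symmetric]) auto
  ultimately show ?thesis using t by blast
qed

(* Read as a density on \<open>Z_N ^ D\<close>, \<open>F\<close> makes every single coordinate uniform. *)
definition uniform_marginals :: "'d set \<Rightarrow> nat \<Rightarrow> (('d \<Rightarrow> nat) \<Rightarrow> 'a::comm_semiring_1) \<Rightarrow> bool" where
  "uniform_marginals D N F \<longleftrightarrow> (\<forall>u\<in>D. \<forall>h :: nat \<Rightarrow> 'a.
     (\<Sum>x\<in>PiE D (\<lambda>_. {0..<N}). h (x u) * F x) = of_nat N ^ (card D - 1) * (\<Sum>a<N. h a))"

lemma uniform_marginals_one: "finite D \<Longrightarrow> uniform_marginals D N (\<lambda>_. 1)"
  using sum_PiE_apply[of D _ _ "{0..<N}"] by (auto simp: uniform_marginals_def atLeast0LessThan)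

lemma uniform_marginals_attach_edge:
  fixes F :: "('d \<Rightarrow> nat) \<Rightarrow> 'a::field_char_0"
  assumes F: "uniform_marginals D N F" and N: "1 \<le> N"
    and T: "set T \<subseteq> D" "distinct T" "m < length T" "one_wise f N (length T)"
    and F_indep: "\<And>x y. F (override_on x y (set T - {T ! m})) = F x"
  shows "uniform_marginals D N (\<lambda>x. F x * f (map x T))"
  unfolding uniform_marginals_def
proof (intro ballI allI)
  fix u and h :: "nat \<Rightarrow> 'a" assume u: "u \<in> D"
  define k where "k = length T"
  define P where "P = set T - {T ! m}"
  have "T ! m \<in> D" using T(1,3) nth_mem by blast
  then have T_m: "x (T ! m) < N" if "x \<in> PiE D (\<lambda>_. {0..<N})" for x
    using that by (auto simp: PiE_iff)
  show "(\<Sum>x\<in>PiE D (\<lambda>_. {0..<N}). h (x u) * (F x * f (map x T)))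
      = of_nat N ^ (card D - 1) * (\<Sum>a<N. h a)"
  proof (cases "u \<in> P")
    case False
    have H_indep: "h (override_on x y P u) * F (override_on x y P) = h (x u) * F x" for x y
      using False F_indep by (simp add: P_def)
    have "of_nat N ^ (k - 1) * (\<Sum>x\<in>PiE D (\<lambda>_. {0..<N}). h (x u) * (F x * f (map x T)))
        = (\<Sum>x\<in>PiE D (\<lambda>_. {0..<N}). h (x u) * F x * sum f (ZN_fibre N k m (x (T ! m))))"
      using sum_PiE_collapse_tuple[where H = "\<lambda>x. h (x u) * F x" and g = f and N = N,
          OF T(1-3) H_indep[unfolded P_def]]
      by (simp add: k_def mult.assoc)
    also have "\<dots> = of_nat N ^ (k - 1) * (\<Sum>x\<in>PiE D (\<lambda>_. {0..<N}). h (x u) * F x)"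
      using T(3,4) T_m by (simp add: k_def one_wise_def sum_distrib_left mult.commute)
    finally show ?thesis using F u N by (simp add: uniform_marginals_def)
  next
    case True
    then obtain \<mu> where \<mu>: "\<mu> < k" "T ! \<mu> = u" "\<mu> \<noteq> m"
      by (auto simp: P_def k_def in_set_conv_nth)
    define \<psi> where "\<psi> c = (\<Sum>v\<in>ZN_fibre N k m c. h (v ! \<mu>) * f v)" for c
    have "of_nat N ^ (k - 1) * (\<Sum>x\<in>PiE D (\<lambda>_. {0..<N}). h (x u) * (F x * f (map x T)))
        = (\<Sum>x\<in>PiE D (\<lambda>_. {0..<N}). \<psi> (x (T ! m)) * F x)"
      using sum_PiE_collapse_tuple[where H = F and g = "\<lambda>v. h (v ! \<mu>) * f v" and N = N,
          OF T(1-3) F_indep] \<mu>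
      by (simp add: k_def \<psi>_def ac_simps)
    also have "\<dots> = of_nat N ^ (card D - 1) * (\<Sum>c<N. \<psi> c)"
      using F \<open>T ! m \<in> D\<close> unfolding uniform_marginals_def by blast
    also have "\<dots> = of_nat N ^ (card D - 1) * (of_nat N ^ (k - 1) * (\<Sum>a<N. h a))"
      using sum_one_wise_fibres[OF T(4)[folded k_def] T(3)[folded k_def] \<mu>(1)] by (simp add: \<psi>_def)
    finally show ?thesis using N by (simp add: ac_simps)
  qed
qed

(* The last conjunct is the acyclicity of the paper: any \<open>l\<close> edges cover more than \<open>l (k - 1)\<close>
   vertices. *)
definition weighted_hyperforest :: "'d set \<Rightarrow> 'j set \<Rightarrow> ('j \<Rightarrow> 'd list)
    \<Rightarrow> ('j \<Rightarrow> nat list \<Rightarrow> 'a::comm_semiring_1) \<Rightarrow> nat \<Rightarrow> nat \<Rightarrow> bool" where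
  "weighted_hyperforest D I edge w N k \<longleftrightarrow> finite D \<and> finite I \<and> 1 \<le> N \<and>
     (\<forall>\<iota>\<in>I. distinct (edge \<iota>) \<and> length (edge \<iota>) = k \<and> set (edge \<iota>) \<subseteq> D \<and> one_wise (w \<iota>) N k) \<and>
     (\<forall>F\<subseteq>I. F \<noteq> {} \<longrightarrow> card F * (k - 1) < card (\<Union>\<iota>\<in>F. set (edge \<iota>)))"

lemma weighted_hyperforest_subset:
  assumes "weighted_hyperforest D I edge w N k" "J \<subseteq> I" "finite D'" "\<forall>\<iota>\<in>J. set (edge \<iota>) \<subseteq> D'"
  shows "weighted_hyperforest D' J edge w N k"
  using assms unfolding weighted_hyperforest_def by (auto intro: finite_subset)

lemma weighted_hyperforest_has_leaf:
  assumes "weighted_hyperforest D I edge w N k" "I \<noteq> {}"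
  obtains t m where "t \<in> I" "m < length (edge t)"
    "\<forall>\<iota>\<in>I - {t}. set (edge \<iota>) \<inter> (set (edge t) - {edge t ! m}) = {}"
proof -
  have "finite I" and edges: "\<forall>\<iota>\<in>I. finite (set (edge \<iota>)) \<and> card (set (edge \<iota>)) = k"
    and "card I * (k - 1) < card (\<Union>\<iota>\<in>I. set (edge \<iota>))"
    using assms by (simp_all add: weighted_hyperforest_def distinct_card)
  then obtain t r where "t \<in> I" "r \<in> set (edge t)"
    and "\<forall>\<iota>\<in>I - {t}. set (edge \<iota>) \<inter> (set (edge t) - {r}) = {}"
    using hyperforest_has_leaf[where A = "\<lambda>\<iota>. set (edge \<iota>)", OF _ assms(2)] by blast
  then show ?thesis using that by (auto simp: in_set_conv_nth)
qed

lemma uniform_marginals_weighted_hyperforest: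
  fixes w :: "'j \<Rightarrow> nat list \<Rightarrow> 'a::field_char_0"
  assumes "weighted_hyperforest D I edge w N k"
  shows "uniform_marginals D N (\<lambda>x. \<Prod>\<iota>\<in>I. w \<iota> (map x (edge \<iota>)))"
proof -
  have "finite I" using assms by (simp add: weighted_hyperforest_def)
  then show ?thesis using assms
  proof (induction I rule: finite_psubset_induct)
    case (psubset I)
    have D: "finite D" and N: "1 \<le> N"
      and edges: "\<forall>\<iota>\<in>I. distinct (edge \<iota>) \<and> length (edge \<iota>) = k \<and> set (edge \<iota>) \<subseteq> D \<and> one_wise (w \<iota>) N k"
      using psubset.prems by (simp_all add: weighted_hyperforest_def)
    show ?case
    proof (cases "I = {}")
      case True
      then show ?thesis using uniform_marginals_one[OF D] by simp
    next
      case False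
      obtain t m where t: "t \<in> I" and m: "m < length (edge t)"
        and leaf: "\<forall>\<iota>\<in>I - {t}. set (edge \<iota>) \<inter> (set (edge t) - {edge t ! m}) = {}"
        using weighted_hyperforest_has_leaf[OF psubset.prems False] by blast
      have "weighted_hyperforest D (I - {t}) edge w N k"
        using psubset.prems by (rule weighted_hyperforest_subset) (use D edges in auto)
      then have IH: "uniform_marginals D N (\<lambda>x. \<Prod>\<iota>\<in>I - {t}. w \<iota> (map x (edge \<iota>)))"
        by (rule psubset.IH[rotated]) (use t in blast)
      have map_eq: "map (override_on x y (set (edge t) - {edge t ! m})) (edge \<iota>) = map x (edge \<iota>)"
        if "\<iota> \<in> I - {t}" for \<iota> x y
        using leaf that by (intro map_cong refl override_on_apply_notin) blast
      have indep: "(\<Prod>\<iota>\<in>I - {t}. w \<iota> (map (override_on x y (set (edge t) - {edge t ! m})) (edge \<iota>)))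
          = (\<Prod>\<iota>\<in>I - {t}. w \<iota> (map x (edge \<iota>)))" for x y
        by (intro prod.cong refl) (simp only: map_eq)
      have "uniform_marginals D N (\<lambda>x. (\<Prod>\<iota>\<in>I - {t}. w \<iota> (map x (edge \<iota>))) * w t (map x (edge t)))"
        by (rule uniform_marginals_attach_edge[OF IH N _ _ m _ indep]) (use edges t in auto)
      then show ?thesis by (simp add: prod.remove[OF psubset.hyps t] mult.commute)
    qed
  qed
qed

corollary sum_weighted_hyperforest:
  fixes w :: "'j \<Rightarrow> nat list \<Rightarrow> 'a::field_char_0"
  assumes "weighted_hyperforest D I edge w N k"
  shows "(\<Sum>x\<in>PiE D (\<lambda>_. {0..<N}). \<Prod>\<iota>\<in>I. w \<iota> (map x (edge \<iota>))) = of_nat N ^ card D"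
proof (cases "D = {}")
  case True
  then have "I = {}"
    using assms by (fastforce simp: weighted_hyperforest_def)
  then show ?thesis using True by simp
next
  case False
  then obtain u where u: "u \<in> D" by blast
  have "card D \<noteq> 0" using assms u by (auto simp: weighted_hyperforest_def)
  moreover have "(\<Sum>x\<in>PiE D (\<lambda>_. {0..<N}). 1 * (\<Prod>\<iota>\<in>I. w \<iota> (map x (edge \<iota>))))
      = of_nat N ^ (card D - 1) * (\<Sum>a<N. 1)"
    using uniform_marginals_weighted_hyperforest[OF assms, unfolded uniform_marginals_def, rule_format, OF u, of "\<lambda>_. 1"]
    by simp
  ultimately show ?thesis by (cases "card D") (simp_all add: mult.commute)
qed

lemma sum_cnj_root_unity_eq_0:
  assumes "0 < b" "b < N"
  shows "(\<Sum>a<N. cnj (exp (2 * of_real pi * \<i> / of_nat N * of_nat (b * a)))) = (0::complex)"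
proof -
  define \<omega> where "\<omega> = exp (2 * of_real pi * \<i> * of_nat b / of_nat N)"
  have power: "exp (2 * of_real pi * \<i> / of_nat N * of_nat (b * a)) = \<omega> ^ a" for a
    unfolding \<omega>_def by (simp add: exp_of_nat_mult[symmetric] ac_simps)
  have "\<omega> ^ N = 1" using complex_root_unity[of N b] assms by (simp add: \<omega>_def)
  moreover have "\<omega> \<noteq> 1" using complex_root_unity_eq_1[of N b] assms by (simp add: \<omega>_def nat_dvd_not_less)
  ultimately have "(\<Sum>a<N. \<omega> ^ a) = 0" by (simp add: sum_gp_strict)
  moreover have "(\<Sum>a<N. cnj (exp (2 * of_real pi * \<i> / of_nat N * of_nat (b * a))))
      = cnj (\<Sum>a<N. \<omega> ^ a)"
    by (simp only: power cnj_sum)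
  ultimately show ?thesis by simp
qed

lemma prod_override_on_closed:
  assumes "finite I" and closed: "\<forall>\<iota>\<in>I. set (edge \<iota>) \<subseteq> C \<or> set (edge \<iota>) \<inter> C = {}"
  defines "IC \<equiv> {\<iota>\<in>I. set (edge \<iota>) \<subseteq> C}"
  shows "(\<Prod>\<iota>\<in>I. w \<iota> (map (override_on x y C) (edge \<iota>)))
       = (\<Prod>\<iota>\<in>I - IC. w \<iota> (map x (edge \<iota>))) * (\<Prod>\<iota>\<in>IC. w \<iota> (map y (edge \<iota>)))"
proof -
  have outside: "map (override_on x y C) (edge \<iota>) = map x (edge \<iota>)" if "\<iota> \<in> I - IC" for \<iota>
  proof -
    have "set (edge \<iota>) \<inter> C = {}" using closed that by (auto simp: IC_def)
    then show ?thesis by (intro map_cong refl override_on_apply_notin) blast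
  qed
  have inside: "map (override_on x y C) (edge \<iota>) = map y (edge \<iota>)" if "\<iota> \<in> IC" for \<iota>
    using that by (auto simp: IC_def subset_iff)
  have "(\<Prod>\<iota>\<in>I. w \<iota> (map (override_on x y C) (edge \<iota>)))
      = (\<Prod>\<iota>\<in>I - IC. w \<iota> (map (override_on x y C) (edge \<iota>)))
        * (\<Prod>\<iota>\<in>IC. w \<iota> (map (override_on x y C) (edge \<iota>)))"
    using assms(1) by (intro prod.subset_diff) (auto simp: IC_def)
  also have "\<dots> = (\<Prod>\<iota>\<in>I - IC. w \<iota> (map x (edge \<iota>))) * (\<Prod>\<iota>\<in>IC. w \<iota> (map y (edge \<iota>)))"
    by (intro arg_cong2[where f = "(*)"] prod.cong refl) (simp_all only: outside inside)
  finally show ?thesis .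
qed

lemma sum_mult_override_on_single:
  fixes b :: "'d \<Rightarrow> 'a::comm_semiring_0"
  assumes "finite D" "C \<subseteq> D" "u \<in> C" "\<forall>v\<in>C - {u}. b v = 0"
  shows "(\<Sum>v\<in>D. b v * override_on x y C v) = (\<Sum>v\<in>D - C. b v * x v) + b u * y u"
proof -
  have "(\<Sum>v\<in>C. b v * override_on x y C v) = b u * y u"
    using assms by (subst sum.remove[of C u]) (auto intro: finite_subset sum.neutral)
  then show ?thesis using assms(1,2) by (simp add: sum.subset_diff[of C D])
qed

lemma sum_weighted_hyperforest_character_eq_0:
  fixes w :: "'j \<Rightarrow> nat list \<Rightarrow> complex" and edge :: "'j \<Rightarrow> 'd list"
  assumes wf: "weighted_hyperforest D I edge w N k" and C: "C \<subseteq> D"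
    and closed: "\<forall>\<iota>\<in>I. set (edge \<iota>) \<subseteq> C \<or> set (edge \<iota>) \<inter> C = {}"
    and u: "u \<in> C" "0 < b u" "b u < N" and b_C: "\<forall>v\<in>C - {u}. b v = 0"
  shows "(\<Sum>x\<in>PiE D (\<lambda>_. {0..<N}). (\<Prod>\<iota>\<in>I. w \<iota> (map x (edge \<iota>)))
           * cnj (exp (2 * of_real pi * \<i> / of_nat N * of_nat (\<Sum>v\<in>D. b v * x v)))) = 0"
proof -
  define c where "c = 2 * of_real pi * \<i> / (of_nat N :: complex)"
  define IC where "IC = {\<iota>\<in>I. set (edge \<iota>) \<subseteq> C}"
  define \<theta> where "\<theta> y = cnj (exp (c * of_nat (b u * y u)))" for y :: "'d \<Rightarrow> nat"
  have D: "finite D" and I: "finite I" using wf by (simp_all add: weighted_hyperforest_def)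
  have wf_C: "weighted_hyperforest C IC edge w N k"
    using wf by (rule weighted_hyperforest_subset) (use C D in \<open>auto simp: IC_def intro: finite_subset\<close>)
  have inner: "(\<Sum>y\<in>PiE C (\<lambda>_. {0..<N}). \<theta> y * (\<Prod>\<iota>\<in>IC. w \<iota> (map y (edge \<iota>)))) = 0"
    using uniform_marginals_weighted_hyperforest[OF wf_C, unfolded uniform_marginals_def, rule_format,
        OF u(1), of "\<lambda>a. cnj (exp (c * of_nat (b u * a)))"]
      sum_cnj_root_unity_eq_0[OF u(2,3)]
    by (simp add: \<theta>_def c_def)
  have "(\<Sum>x\<in>PiE D (\<lambda>_. {0..<N}). (\<Prod>\<iota>\<in>I. w \<iota> (map x (edge \<iota>)))
           * cnj (exp (c * of_nat (\<Sum>v\<in>D. b v * x v))))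
      = (\<Sum>x\<in>PiE (D - C) (\<lambda>_. {0..<N}). (\<Prod>\<iota>\<in>I - IC. w \<iota> (map x (edge \<iota>)))
           * cnj (exp (c * of_nat (\<Sum>v\<in>D - C. b v * x v)))
           * (\<Sum>y\<in>PiE C (\<lambda>_. {0..<N}). \<theta> y * (\<Prod>\<iota>\<in>IC. w \<iota> (map y (edge \<iota>)))))"
    by (subst sum_PiE_override_on[OF C])
      (simp add: prod_override_on_closed[OF I closed] sum_mult_override_on_single[OF D C u(1) b_C]
        IC_def \<theta>_def distrib_left exp_add sum_distrib_left ac_simps)
  also have "\<dots> = 0" by (simp add: inner)
  finally show ?thesis by (simp add: c_def)
qed

lemma add_mod_sub_cancel:
  fixes x y N :: nat
  assumes "x < N" "y < N"
  shows "((x + y) mod N + N - y) mod N = x"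
proof -
  have "(x + y) mod N + N - y = (x + y) mod N + (N - y)" using assms(2) by (simp add: add_diff_assoc)
  then have "((x + y) mod N + N - y) mod N = ((x + y) mod N + (N - y)) mod N" by (rule arg_cong)
  also have "\<dots> = (x + y + (N - y)) mod N" by (rule mod_add_left_eq)
  also have "x + y + (N - y) = x + N" using assms(2) by simp
  finally show ?thesis using assms(1) by simp
qed

lemma sub_mod_add_cancel:
  fixes x y N :: nat
  assumes "x < N" "y < N"
  shows "((x + N - y) mod N + y) mod N = x"
proof -
  have "((x + N - y) mod N + y) mod N = (x + N - y + y) mod N" by (simp add: mod_add_left_eq)
  also have "x + N - y + y = x + N" using assms by simp
  finally show ?thesis using assms by simp
qed

lemma bij_betw_vsub_ZN_fibre:
  assumes c: "c \<in> ZN_vecs N k" and "m < k" "a < N"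
  shows "bij_betw (\<lambda>v. vsub N v c) (ZN_fibre N k m a) (ZN_fibre N k m ((a + N - c ! m) mod N))"
proof (rule bij_betw_byWitness[where f' = "\<lambda>w. map2 (\<lambda>x y. (x + y) mod N) w c"])
  have c_len: "length c = k" and c_N: "\<forall>i<k. c ! i < N" using c by (auto simp: ZN_vecs_def)
  have vsub_nth: "vsub N v c ! i = (v ! i + N - c ! i) mod N" if "length v = k" "i < k" for v i
    using that c_len c_N by (simp add: vsub_def)
  show "\<forall>v\<in>ZN_fibre N k m a. map2 (\<lambda>x y. (x + y) mod N) (vsub N v c) c = v"
    using c_len c_N vsub_nth sub_mod_add_cancel
    by (auto simp: ZN_fibre_def ZN_vecs_def vsub_def intro!: nth_equalityI)
  show "\<forall>w\<in>ZN_fibre N k m ((a + N - c ! m) mod N). vsub N (map2 (\<lambda>x y. (x + y) mod N) w c) c = w"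
    using c_len c_N add_mod_sub_cancel
    by (auto simp: ZN_fibre_def ZN_vecs_def vsub_def intro!: nth_equalityI)
  show "(\<lambda>v. vsub N v c) ` ZN_fibre N k m a \<subseteq> ZN_fibre N k m ((a + N - c ! m) mod N)"
    using assms(2,3) c_len vsub_nth by (auto simp: ZN_fibre_def ZN_vecs_def vsub_def set_conv_nth)
  show "(\<lambda>w. map2 (\<lambda>x y. (x + y) mod N) w c) ` ZN_fibre N k m ((a + N - c ! m) mod N) \<subseteq> ZN_fibre N k m a"
    using assms(2,3) c_len c_N sub_mod_add_cancel by (auto simp: ZN_fibre_def ZN_vecs_def set_conv_nth)
qed

lemma sum_pmf_ZN_fibre:
  assumes "set_pmf p \<subseteq> ZN_vecs N k"
  shows "sum (pmf p) (ZN_fibre N k m a) = measure_pmf.prob p {w. w ! m = a}"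
proof -
  have "sum (pmf p) (ZN_fibre N k m a) = measure_pmf.prob p (ZN_fibre N k m a)"
    using finite_ZN_vecs by (intro measure_measure_pmf_finite[symmetric]) (simp add: ZN_fibre_def)
  also have "ZN_fibre N k m a \<inter> set_pmf p = {w. w ! m = a} \<inter> set_pmf p"
    using assms by (auto simp: ZN_fibre_def)
  then have "measure_pmf.prob p (ZN_fibre N k m a) = measure_pmf.prob p {w. w ! m = a}"
    by (metis measure_Int_set_pmf)
  finally show ?thesis .
qed

lemma one_wise_shifted_pmf:
  assumes p: "set_pmf p \<subseteq> ZN_vecs N k" "\<forall>m<k. \<forall>a<N. measure_pmf.prob p {w. w ! m = a} = 1 / real N"
    and c: "c \<in> ZN_vecs N k"
  shows "one_wise (\<lambda>v. real N ^ k * pmf p (vsub N v c)) N k"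
  unfolding one_wise_def
proof (intro allI impI)
  fix m a assume m: "m < k" and a: "a < N"
  have "sum (\<lambda>v. pmf p (vsub N v c)) (ZN_fibre N k m a)
      = sum (pmf p) (ZN_fibre N k m ((a + N - c ! m) mod N))"
    by (rule sum.reindex_bij_betw[OF bij_betw_vsub_ZN_fibre[OF c m a]])
  also have "\<dots> = 1 / real N"
    using p a by (simp add: sum_pmf_ZN_fibre m)
  finally show "(\<Sum>v\<in>ZN_fibre N k m a. real N ^ k * pmf p (vsub N v c)) = of_nat N ^ (k - 1)"
    using m a by (simp add: sum_distrib_left[symmetric] power_eq_if)
qed

lemma one_wise_of_real:
  "one_wise f N k \<Longrightarrow> one_wise (\<lambda>v. of_real (f v) :: 'a::{real_algebra_1, comm_semiring_1}) N k"
  unfolding one_wise_def by (metis of_real_sum of_real_of_nat_eq of_real_power)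

lemma weighted_hyperforest_of_real:
  "weighted_hyperforest D I edge w N k
    \<Longrightarrow> weighted_hyperforest D I edge (\<lambda>\<iota> v. of_real (w \<iota> v) :: 'a::{real_algebra_1, comm_semiring_1}) N k"
  unfolding weighted_hyperforest_def using one_wise_of_real by blast

lemma set_prodU:
  assumes "t \<in> prodU e n"
  shows "set t \<subseteq> set e \<times> {1..n}"
proof
  fix s assume "s \<in> set t"
  then obtain i where "i < length t" "s = t ! i" by (auto simp: in_set_conv_nth)
  then show "s \<in> set e \<times> {1..n}" using assms nth_mem by (fastforce simp: prodU_def mem_Times_iff)
qed

lemma distinct_prodU: "t \<in> prodU e n \<Longrightarrow> distinct e \<Longrightarrow> distinct t"
  by (auto simp: prodU_def distinct_conv_nth) metis

lemma finite_prodU: "finite (prodU e n)"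
proof (rule finite_subset)
  show "prodU e n \<subseteq> {t. set t \<subseteq> set e \<times> {1..n} \<and> length t = length e}"
    using set_prodU by (auto simp: prodU_def)
qed (simp add: finite_lists_length_eq)

definition restriction_edges :: "'i set \<Rightarrow> ('i \<Rightarrow> 'v list) \<Rightarrow> nat \<Rightarrow> nat
    \<Rightarrow> ('i \<Rightarrow> nat \<Rightarrow> ('v \<times> nat) list \<Rightarrow> nat list option) \<Rightarrow> ('i \<times> nat \<times> ('v \<times> nat) list) set" where
  "restriction_edges E tup n K z = (SIGMA i:E. SIGMA j:{1..K}. rsupp (tup i) n (z i j))"

definition restriction_weight :: "nat \<Rightarrow> nat \<Rightarrow> ('i \<Rightarrow> nat list pmf)
    \<Rightarrow> ('i \<Rightarrow> nat \<Rightarrow> ('v \<times> nat) list \<Rightarrow> nat list option) \<Rightarrow> 'i \<times> nat \<times> ('v \<times> nat) list \<Rightarrow> nat list \<Rightarrow> real" where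
  "restriction_weight k N mu z = (\<lambda>(i, j, t) v. real N ^ k * pmf (mu i) (vsub N v (the (z i j t))))"

lemma gzeta_eq_prod_restriction_edges:
  assumes "finite E"
  shows "gzeta E tup k N mu n K z x
       = (\<Prod>\<iota>\<in>restriction_edges E tup n K z. restriction_weight k N mu z \<iota> (map x (snd (snd \<iota>))))"
proof -
  have finite_rsupp: "finite (rsupp e n z')" for e z'
    by (rule finite_subset[OF _ finite_prodU]) (auto simp: rsupp_def)
  have "gzeta E tup k N mu n K z x = (\<Prod>i\<in>E. \<Prod>(j, t)\<in>(SIGMA j:{1..K}. rsupp (tup i) n (z i j)).
      real N ^ k * pmf (mu i) (vsub N (map x t) (the (z i j t))))"
    unfolding gzeta_def by (intro prod.cong refl, subst prod.Sigma) (auto simp: finite_rsupp split_def)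
  also have "\<dots> = (\<Prod>\<iota>\<in>restriction_edges E tup n K z. restriction_weight k N mu z \<iota> (map x (snd (snd \<iota>))))"
    unfolding restriction_edges_def
    by (subst prod.Sigma) (auto simp: assms finite_rsupp restriction_weight_def split_def intro!: finite_SigmaI)
  finally show ?thesis .
qed

lemma restriction_edges_image: "(snd \<circ> snd) ` restriction_edges E tup n K z = Hedges E tup n K z"
  by (force simp: restriction_edges_def Hedges_def)

lemma inj_on_restriction_edges:
  assumes "\<not> cyclic E tup k n K z"
  shows "inj_on (snd \<circ> snd) (restriction_edges E tup n K z)"
proof (rule inj_onI)
  fix \<iota> \<iota>' assume "\<iota> \<in> restriction_edges E tup n K z" "\<iota>' \<in> restriction_edges E tup n K z"
    and "(snd \<circ> snd) \<iota> = (snd \<circ> snd) \<iota>'"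
  then obtain i j t i' j' where \<iota>: "\<iota> = (i, j, t)" "\<iota>' = (i', j', t)"
    and ij: "i \<in> E" "j \<in> {1..K}" "i' \<in> E" "j' \<in> {1..K}"
    and t: "t \<in> rsupp (tup i) n (z i j)" "t \<in> rsupp (tup i') n (z i' j')"
    by (cases \<iota>, cases \<iota>') (auto simp: restriction_edges_def)
  have "(i, j) = (i', j')"
  proof (rule ccontr)
    assume "(i, j) \<noteq> (i', j')"
    with ij t have "cyclic E tup k n K z" unfolding cyclic_def by blast
    with assms show False ..
  qed
  then show "\<iota> = \<iota>'" using \<iota> by simp
qed

lemma not_cyclic_covers:
  assumes "\<not> cyclic E tup k n K z" "F \<subseteq> Hedges E tup n K z" "F \<noteq> {}" "finite F"
  shows "card F * (k - 1) < card (\<Union>t\<in>F. set t)"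
proof (rule ccontr)
  assume "\<not> ?thesis"
  with assms(2-4) have "\<exists>F\<subseteq>Hedges E tup n K z. F \<noteq> {} \<and> finite F \<and> card (\<Union>t\<in>F. set t) \<le> card F * (k - 1)"
    by (intro exI[of _ F]) simp
  with assms(1) show False unfolding cyclic_def by blast
qed

lemma weighted_hyperforest_restriction:
  assumes G: "dlgraph V E tup k N mu" and rs: "restriction_seq E tup k N n \<alpha> K z"
    and acyc: "\<not> cyclic E tup k n K z"
  shows "weighted_hyperforest (V \<times> {1..n}) (restriction_edges E tup n K z) (snd \<circ> snd)
           (restriction_weight k N mu z) N k"
proof -
  let ?I = "restriction_edges E tup n K z"
  have V: "finite V" and E: "finite E" and N: "2 \<le> N"
    and tup: "\<And>i. i \<in> E \<Longrightarrow> length (tup i) = k \<and> distinct (tup i) \<and> set (tup i) \<subseteq> V \<and>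
        set_pmf (mu i) \<subseteq> ZN_vecs N k \<and>
        (\<forall>m<k. \<forall>a<N. measure_pmf.prob (mu i) {xs. xs ! m = a} = 1 / real N)"
    using G unfolding dlgraph_def by auto
  have I: "finite ?I"
    unfolding restriction_edges_def using E finite_prodU
    by (intro finite_SigmaI) (auto simp: rsupp_def intro: finite_subset)
  show ?thesis
    unfolding weighted_hyperforest_def
  proof (intro conjI ballI allI impI)
    show "finite (V \<times> {1..n})" "finite ?I" "1 \<le> N" using V I N by auto
  next
    fix \<iota> assume "\<iota> \<in> ?I"
    then obtain i j t where \<iota>: "\<iota> = (i, j, t)" and t: "t \<in> prodU (tup i) n" and i: "i \<in> E"
      and c: "the (z i j t) \<in> ZN_vecs N k"
      using rs by (cases \<iota>) (auto simp: restriction_edges_def restriction_seq_def rsupp_def)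
    show "distinct ((snd \<circ> snd) \<iota>)" using tup[OF i] distinct_prodU[OF t] by (simp add: \<iota>)
    show "length ((snd \<circ> snd) \<iota>) = k" using tup[OF i] t by (simp add: \<iota> prodU_def)
    show "set ((snd \<circ> snd) \<iota>) \<subseteq> V \<times> {1..n}" using tup[OF i] set_prodU[OF t] by (auto simp: \<iota>)
    show "one_wise (restriction_weight k N mu z \<iota>) N k"
      using tup[OF i] one_wise_shifted_pmf[OF _ _ c, of "mu i"] by (simp add: \<iota> restriction_weight_def)
  next
    fix F assume F: "F \<subseteq> ?I" "F \<noteq> {}"
    have inj: "inj_on (snd \<circ> snd) F"
      using inj_on_restriction_edges[OF acyc] F(1) by (rule inj_on_subset)
    have "(snd \<circ> snd) ` F \<subseteq> Hedges E tup n K z"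
      using image_mono[OF F(1), of "snd \<circ> snd"] by (simp only: restriction_edges_image)
    moreover have "(snd \<circ> snd) ` F \<noteq> {}" "finite ((snd \<circ> snd) ` F)"
      using F(2) finite_subset[OF F(1) I] by simp_all
    ultimately have "card ((snd \<circ> snd) ` F) * (k - 1) < card (\<Union>t\<in>(snd \<circ> snd) ` F. set t)"
      by (rule not_cyclic_covers[OF acyc])
    then show "card F * (k - 1) < card (\<Union>\<iota>\<in>F. set ((snd \<circ> snd) \<iota>))"
      by (simp only: image_image card_image[OF inj])
  qed
qed

lemma Hedges_subset:
  assumes "dlgraph V E tup k N mu" "t \<in> Hedges E tup n K z"
  shows "set t \<subseteq> V \<times> {1..n}"
proof -
  obtain i j where "i \<in> E" "t \<in> prodU (tup i) n"
    using assms(2) by (auto simp: Hedges_def rsupp_def)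
  moreover have "set (tup i) \<subseteq> V" using assms(1) \<open>i \<in> E\<close> by (simp add: dlgraph_def)
  ultimately show ?thesis using set_prodU by blast
qed

lemma Hcomponents_eq_image:
  "Hcomponents V E tup n K z = (\<lambda>u. {w \<in> V \<times> {1..n}. (u, w) \<in> (Hadj E tup n K z)\<^sup>*}) ` (V \<times> {1..n})"
  unfolding Hcomponents_def by (rule Setcompr_eq_image)

lemma Hcomponents_subset: "C \<in> Hcomponents V E tup n K z \<Longrightarrow> C \<subseteq> V \<times> {1..n}"
  by (auto simp: Hcomponents_eq_image)

lemma Hcomponent_of_vertex:
  assumes "u \<in> V \<times> {1..n}"
  shows "\<exists>C\<in>Hcomponents V E tup n K z. u \<in> C"
proof (rule bexI)
  show "u \<in> {w \<in> V \<times> {1..n}. (u, w) \<in> (Hadj E tup n K z)\<^sup>*}" using assms by simp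
  show "{w \<in> V \<times> {1..n}. (u, w) \<in> (Hadj E tup n K z)\<^sup>*} \<in> Hcomponents V E tup n K z"
    unfolding Hcomponents_eq_image using assms by (rule imageI)
qed

lemma Hcomponent_edge_closed:
  assumes C: "C \<in> Hcomponents V E tup n K z" and t: "t \<in> Hedges E tup n K z" "set t \<subseteq> V \<times> {1..n}"
  shows "set t \<subseteq> C \<or> set t \<inter> C = {}"
proof (rule disjCI)
  assume "set t \<inter> C \<noteq> {}"
  then obtain s where s: "s \<in> set t" "s \<in> C" by blast
  obtain u where C_def: "C = {w \<in> V \<times> {1..n}. (u, w) \<in> (Hadj E tup n K z)\<^sup>*}"
    using C unfolding Hcomponents_eq_image by blast
  show "set t \<subseteq> C"
  proof
    fix s' assume s': "s' \<in> set t"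
    then have "(s, s') \<in> Hadj E tup n K z" using t(1) s(1) unfolding Hadj_def by blast
    then have "(u, s') \<in> (Hadj E tup n K z)\<^sup>*" using s(2) C_def by (blast intro: rtrancl_into_rtrancl)
    then show "s' \<in> C" using C_def t(2) s' by blast
  qed
qed

lemma fourier_gzeta_eq_0:
  assumes G: "dlgraph V E tup k N mu" and rs: "restriction_seq E tup k N n \<alpha> K z"
    and acyc: "\<not> cyclic E tup k n K z"
    and b: "b \<in> assignments V n N" and C: "C \<in> Hcomponents V E tup n K z"
    and supp: "fsupp V n b \<inter> C = {u}"
  shows "fourier V n N (gzeta E tup k N mu n K z) b = 0"
proof -
  let ?I = "restriction_edges E tup n K z"
  have E: "finite E" using G by (simp add: dlgraph_def)
  have wf: "weighted_hyperforest (V \<times> {1..n}) ?I (snd \<circ> snd)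
      (\<lambda>\<iota> v. complex_of_real (restriction_weight k N mu z \<iota> v)) N k"
    by (rule weighted_hyperforest_of_real[OF weighted_hyperforest_restriction[OF G rs acyc]])
  have closed: "\<forall>\<iota>\<in>?I. set ((snd \<circ> snd) \<iota>) \<subseteq> C \<or> set ((snd \<circ> snd) \<iota>) \<inter> C = {}"
    using Hcomponent_edge_closed[OF C] Hedges_subset[OF G] restriction_edges_image by blast
  have u: "u \<in> C" "0 < b u" "b u < N" and b_C: "\<forall>v\<in>C - {u}. b v = 0"
    using supp b Hcomponents_subset[OF C] by (auto simp: fsupp_def assignments_def PiE_iff)
  have "(\<Sum>x\<in>assignments V n N. complex_of_real (gzeta E tup k N mu n K z x) * cnj (character V n N b x)) = 0"
    using sum_weighted_hyperforest_character_eq_0[OF wf Hcomponents_subset[OF C] closed u b_C]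
    by (simp add: assignments_def character_def gzeta_eq_prod_restriction_edges[OF E] of_real_prod)
  then show ?thesis by (simp add: fourier_def unif_expect_def)
qed

lemma unif_expect_gzeta:
  assumes G: "dlgraph V E tup k N mu" and rs: "restriction_seq E tup k N n \<alpha> K z"
    and acyc: "\<not> cyclic E tup k n K z"
  shows "unif_expect V n N (gzeta E tup k N mu n K z) = 1"
proof -
  have V: "finite V" and E: "finite E" and N: "N \<noteq> 0" using G by (auto simp: dlgraph_def)
  have "(\<Sum>x\<in>assignments V n N. gzeta E tup k N mu n K z x) = real N ^ card (V \<times> {1..n})"
    using sum_weighted_hyperforest[OF weighted_hyperforest_restriction[OF G rs acyc]]
    by (simp add: assignments_def gzeta_eq_prod_restriction_edges[OF E])
  moreover have "card (assignments V n N) = N ^ card (V \<times> {1..n})"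
    using V by (simp add: assignments_def card_PiE)
  ultimately show ?thesis using N by (simp add: unif_expect_def)
qed

theorem lemma6p3:
  fixes V :: "'v set" and E :: "'i set" and tup :: "'i \<Rightarrow> 'v list"
    and k N n K :: nat and \<alpha> :: real and mu :: "'i \<Rightarrow> nat list pmf"
    and z :: "'i \<Rightarrow> nat \<Rightarrow> ('v \<times> nat) list \<Rightarrow> nat list option"
  assumes G: "dlgraph V E tup k N mu"
    and rs: "restriction_seq E tup k N n \<alpha> K z"
    and acyc: "\<not> cyclic E tup k n K z"
  shows "unif_expect V n N (gzeta E tup k N mu n K z) = 1
    \<and> (\<forall>b\<in>assignments V n N.
         fourier V n N (gzeta E tup k N mu n K z) b \<noteq> 0 \<longrightarrow>
           fsupp V n b \<subseteq> \<Union>{C \<in> Hcomponents V E tup n K z. card C \<ge> 2} \<and>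
           (\<forall>C\<in>Hcomponents V E tup n K z. card C \<ge> 2 \<longrightarrow> card (fsupp V n b \<inter> C) \<noteq> 1))"
proof (intro conjI ballI impI unif_expect_gzeta[OF G rs acyc])
  fix b assume b: "b \<in> assignments V n N" and nonzero: "fourier V n N (gzeta E tup k N mu n K z) b \<noteq> 0"
  have no_isolated: "fsupp V n b \<inter> C \<noteq> {u}" if "C \<in> Hcomponents V E tup n K z" for C u
    using fourier_gzeta_eq_0[OF G rs acyc b that] nonzero by blast
  show "fsupp V n b \<subseteq> \<Union>{C \<in> Hcomponents V E tup n K z. card C \<ge> 2}"
  proof
    fix u assume u: "u \<in> fsupp V n b"
    then obtain C where C: "C \<in> Hcomponents V E tup n K z" "u \<in> C"
      using Hcomponent_of_vertex unfolding fsupp_def by blast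
    have "finite C"
      using G Hcomponents_subset[OF C(1)] finite_subset unfolding dlgraph_def by blast
    have "2 \<le> card C"
    proof (rule ccontr)
      assume "\<not> 2 \<le> card C"
      then have "C = {u}" using C(2) card_le_Suc0_iff_eq[OF \<open>finite C\<close>] by auto
      with u no_isolated[OF C(1)] show False by blast
    qed
    with C show "u \<in> \<Union>{C \<in> Hcomponents V E tup n K z. card C \<ge> 2}" by blast
  qed
  fix C assume "C \<in> Hcomponents V E tup n K z"
  then show "card (fsupp V n b \<inter> C) \<noteq> 1"
    using no_isolated card_1_singletonE by blast
qed

end
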